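(* Let $k\ge3$. Let $G=(V,E)$ be a $(k-2)$-connected $k$-colorable chordal graph and let $T$ be a clique of $G$ with $T\ne V$, such that $(G,T)$ can be obtained from $(G-v,T\setminus\{v\})$ using an introduce operation. If $\mathcal{C}^c_k(G-v,T\setminus\{v\})$ is a $(k-2,k)$-color-complete graph, then $\mathcal{C}^c_k(G,T)$ is a $(k-1,k)$-color-complete graph. If $|T|=k$ or $\mathcal{C}^c_k(G-v,T\setminus\{v\})$ is a forest that satisfies the injective neighborhood property, then $\mathcal{C}^c_k(G,T)$ is a forest that satisfies the injective neighborhood property.
   Context: A chordal graph has no induced cycle of length $>3$; for $\ell\ge1$, $G$ is $\ell$-connected if $|V(G)|\ge\ell+1$ and every vertex cut has at least $\ell$ vertices. $(G,T)$ (a graph with $T\subseteq V(G)$) is obtained from $(G-v,T\setminus\{v\})$ by introducing $v$ if $T\ne V(G)$, $v\in T$ and $N(v)\subseteq T$. A $k$-coloring of $G$ is a map $\alpha:V(G)\to\{1,\dots,k\}$ with $\alpha(u)\ne\alpha(w)$ for all edges $uw$. $\mathcal{C}_k(G)$ has the $k$-colorings as nodes, adjacent iff they differ on exactly one vertex. For $T\subseteq V(G)$, label each coloring $\gamma$ by $\gamma|_T$. A label component is a maximal set of colorings with the same label inducing a connected subgraph of $\mathcal{C}_k(G)$. The contracted solution graph $\mathcal{C}^c_k(G,T)=(H,\ell)$ has one node $x$ per label component $S_x$, distinct $x,y$ adjacent iff some $\gamma\in S_x,\gamma'\in S_y$ are adjacent in $\mathcal{C}_k(G)$, and $\ell(x)$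 the common label on $S_x$. For $1\le m\le k$, a labeled graph $(H,\ell)$ is $(m,k)$-color-complete if there is a set $T$ with $|T|=m$ such that every label is a $k$-coloring of the complete graph on $T$, every such $k$-coloring is the label of exactly one node, and two nodes are adjacent iff their labels differ on exactly one element of $T$. $(H,\ell)$ satisfies the injective neighborhood property if any two distinct neighbors of any node have distinct labels. *)

theory Defs
  imports Main
begin

definition sgraph :: "'a set \<Rightarrow> 'a set set \<Rightarrow> bool" where
  "sgraph V E \<longleftrightarrow> finite V \<and> (\<forall>e\<in>E. \<exists>u w. e = {u, w} \<and> u \<noteq> w \<and> u \<in> V \<and> w \<in> V)"

definition adj :: "'a set set \<Rightarrow> 'a \<Rightarrow> 'a \<Rightarrow> bool" where
  "adj E u w \<longleftrightarrow> {u, w} \<in> E"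

definition neighbors :: "'a set \<Rightarrow> 'a set set \<Rightarrow> 'a \<Rightarrow> 'a set" where
  "neighbors V E v = {w \<in> V. adj E v w}"

definition is_clique :: "'a set \<Rightarrow> 'a set set \<Rightarrow> 'a set \<Rightarrow> bool" where
  "is_clique V E T \<longleftrightarrow> T \<subseteq> V \<and> (\<forall>u\<in>T. \<forall>w\<in>T. u \<noteq> w \<longrightarrow> adj E u w)"

definition connected_on :: "'a set set \<Rightarrow> 'a set \<Rightarrow> bool" where
  "connected_on E W \<longleftrightarrow>
     (\<forall>u\<in>W. \<forall>w\<in>W. (\<lambda>x y. x \<in> W \<and> y \<in> W \<and> adj E x y)\<^sup>*\<^sup>* u w)"

definition vertex_cut :: "'a set \<Rightarrow> 'a set set \<Rightarrow> 'a set \<Rightarrow> bool" where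
  "vertex_cut V E S \<longleftrightarrow> S \<subseteq> V \<and> \<not> connected_on E (V - S)"

definition l_connected :: "nat \<Rightarrow> 'a set \<Rightarrow> 'a set set \<Rightarrow> bool" where
  "l_connected l V E \<longleftrightarrow> card V \<ge> l + 1 \<and> (\<forall>S. vertex_cut V E S \<longrightarrow> card S \<ge> l)"

definition chordal :: "'a set \<Rightarrow> 'a set set \<Rightarrow> bool" where
  "chordal V E \<longleftrightarrow> \<not> (\<exists>cs. distinct cs \<and> length cs \<ge> 4 \<and> set cs \<subseteq> V \<and>
      (\<forall>i<length cs. \<forall>j<length cs.
          adj E (cs ! i) (cs ! j) \<longleftrightarrow> (j = Suc i mod length cs \<or> i = Suc j mod length cs)))"

definition coloring :: "nat \<Rightarrow> 'a set \<Rightarrow> 'a set set \<Rightarrow> ('a \<Rightarrow> nat) \<Rightarrow> bool" where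
  "coloring k V E \<alpha> \<longleftrightarrow> (\<forall>v\<in>V. \<alpha> v \<in> {1..k}) \<and> (\<forall>v. v \<notin> V \<longrightarrow> \<alpha> v = 0) \<and>
      (\<forall>u\<in>V. \<forall>w\<in>V. adj E u w \<longrightarrow> \<alpha> u \<noteq> \<alpha> w)"

definition colorable :: "nat \<Rightarrow> 'a set \<Rightarrow> 'a set set \<Rightarrow> bool" where
  "colorable k V E \<longleftrightarrow> (\<exists>\<alpha>. coloring k V E \<alpha>)"

definition col_adj :: "'a set \<Rightarrow> ('a \<Rightarrow> nat) \<Rightarrow> ('a \<Rightarrow> nat) \<Rightarrow> bool" where
  "col_adj V \<alpha> \<beta> \<longleftrightarrow> card {v \<in> V. \<alpha> v \<noteq> \<beta> v} = 1"

definition label :: "'a set \<Rightarrow> ('a \<Rightarrow> nat) \<Rightarrow> ('a \<Rightarrow> nat)" where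
  "label T \<gamma> = (\<lambda>v. if v \<in> T then \<gamma> v else 0)"

definition same_label_connected ::
  "nat \<Rightarrow> 'a set \<Rightarrow> 'a set set \<Rightarrow> 'a set \<Rightarrow> ('a \<Rightarrow> nat) set \<Rightarrow> bool" where
  "same_label_connected k V E T S \<longleftrightarrow>
     S \<noteq> {} \<and> S \<subseteq> {\<alpha>. coloring k V E \<alpha>} \<and>
     (\<forall>\<gamma>\<in>S. \<forall>\<gamma>'\<in>S. label T \<gamma> = label T \<gamma>') \<and>
     (\<forall>\<gamma>\<in>S. \<forall>\<gamma>'\<in>S. (\<lambda>a b. a \<in> S \<and> b \<in> S \<and> col_adj V a b)\<^sup>*\<^sup>* \<gamma> \<gamma>')"

definition label_component ::
  "nat \<Rightarrow> 'a set \<Rightarrow> 'a set set \<Rightarrow> 'a set \<Rightarrow> ('a \<Rightarrow> nat) set \<Rightarrow> bool" where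
  "label_component k V E T S \<longleftrightarrow> same_label_connected k V E T S \<and>
     (\<forall>S'. S \<subseteq> S' \<and> same_label_connected k V E T S' \<longrightarrow> S' = S)"

definition csg_nodes :: "nat \<Rightarrow> 'a set \<Rightarrow> 'a set set \<Rightarrow> 'a set \<Rightarrow> ('a \<Rightarrow> nat) set set" where
  "csg_nodes k V E T = {S. label_component k V E T S}"

definition csg_adj :: "'a set \<Rightarrow> ('a \<Rightarrow> nat) set \<Rightarrow> ('a \<Rightarrow> nat) set \<Rightarrow> bool" where
  "csg_adj V S S' \<longleftrightarrow> S \<noteq> S' \<and> (\<exists>\<gamma>\<in>S. \<exists>\<gamma>'\<in>S'. col_adj V \<gamma> \<gamma>')"

definition csg_label :: "'a set \<Rightarrow> ('a \<Rightarrow> nat) set \<Rightarrow> ('a \<Rightarrow> nat)" where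
  "csg_label T S = label T (SOME \<gamma>. \<gamma> \<in> S)"

definition complete_edges :: "'a set \<Rightarrow> 'a set set" where
  "complete_edges T = {{u, w} | u w. u \<in> T \<and> w \<in> T \<and> u \<noteq> w}"

definition color_complete ::
  "nat \<Rightarrow> nat \<Rightarrow> 'n set \<Rightarrow> ('n \<Rightarrow> 'n \<Rightarrow> bool) \<Rightarrow> ('n \<Rightarrow> 'a \<Rightarrow> nat) \<Rightarrow> bool" where
  "color_complete m k N A lab \<longleftrightarrow> (\<exists>T. finite T \<and> card T = m \<and>
     (\<forall>x\<in>N. coloring k T (complete_edges T) (lab x)) \<and>
     (\<forall>\<beta>. coloring k T (complete_edges T) \<beta> \<longrightarrow> (\<exists>!x. x \<in> N \<and> lab x = \<beta>)) \<and>
     (\<forall>x\<in>N. \<forall>y\<in>N. A x y \<longleftrightarrow> card {t \<in> T. lab x t \<noteq> lab y t} = 1))"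

definition forest :: "'n set \<Rightarrow> ('n \<Rightarrow> 'n \<Rightarrow> bool) \<Rightarrow> bool" where
  "forest N A \<longleftrightarrow> \<not> (\<exists>cs. distinct cs \<and> length cs \<ge> 3 \<and> set cs \<subseteq> N \<and>
      (\<forall>i<length cs. A (cs ! i) (cs ! (Suc i mod length cs))))"

definition inj_nbhd :: "'n set \<Rightarrow> ('n \<Rightarrow> 'n \<Rightarrow> bool) \<Rightarrow> ('n \<Rightarrow> 'b) \<Rightarrow> bool" where
  "inj_nbhd N A lab \<longleftrightarrow>
     (\<forall>x\<in>N. \<forall>y\<in>N. \<forall>z\<in>N. A x y \<and> A x z \<and> y \<noteq> z \<longrightarrow> lab y \<noteq> lab z)"

definition introduces :: "'a set \<Rightarrow> 'a set set \<Rightarrow> 'a set \<Rightarrow> 'a \<Rightarrow> bool" where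
  "introduces V E T v \<longleftrightarrow> T \<noteq> V \<and> v \<in> T \<and> neighbors V E v \<subseteq> T"

end

theory Submission
  imports Defs
begin

text \<open>
  Since all neighbours of \<open>v\<close> lie in \<open>T\<close>, a colouring of \<open>G\<close> is a colouring of \<open>G - v\<close>
  together with a colour for \<open>v\<close> avoiding the colours of \<open>T - v\<close>, and label-preserving
  recolourings of \<open>G\<close> are those of \<open>G - v\<close> with the colour of \<open>v\<close> kept fixed. So a label
  component of \<open>G\<close> is determined by its restriction, a label component of \<open>G - v\<close>, and the
  colour of \<open>v\<close>; this transfers colour-completeness from \<open>G - v\<close> to \<open>G\<close>.

  If \<open>|T| = k\<close>, every colour occurs on \<open>T\<close>, so no single recolouring changes the label and
  the contracted graph has no edges. Otherwise \<open>T - v\<close>, which separates \<open>v\<close> from \<open>V - T\<close>,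
  has exactly \<open>k - 2\<close> vertices, so \<open>v\<close> has exactly two free colours over each component of
  \<open>G - v\<close>: every node downstairs has at most two preimages, and an edge upstairs either
  recolours \<open>v\<close> or lies over an edge downstairs, with \<open>v\<close> keeping the unique colour free at
  both of its ends. Hence at most one edge lies over each edge downstairs, the projection maps
  subgraphs of minimum degree two to subgraphs of minimum degree two, and two neighbours with
  equal labels would project to two neighbours with equal labels.
\<close>

section \<open>Label components as classes of label-preserving recolourings\<close>

lemma col_adj_commute: "col_adj V a b = col_adj V b a"
proof -
  have "{v\<in>V. a v \<noteq> b v} = {v\<in>V. b v \<noteq> a v}" by auto
  then show ?thesis unfolding col_adj_def by simp
qed

definition label_step :: "nat \<Rightarrow> 'a set \<Rightarrow> 'a set set \<Rightarrow> 'a set \<Rightarrow> ('a \<Rightarrow> nat) \<Rightarrow> ('a \<Rightarrow> nat) \<Rightarrow> bool" where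
  "label_step k V E T a b \<longleftrightarrow>
     coloring k V E a \<and> coloring k V E b \<and> label T a = label T b \<and> col_adj V a b"

definition label_class :: "nat \<Rightarrow> 'a set \<Rightarrow> 'a set set \<Rightarrow> 'a set \<Rightarrow> ('a \<Rightarrow> nat) \<Rightarrow> ('a \<Rightarrow> nat) set" where
  "label_class k V E T a = {b. (label_step k V E T)\<^sup>*\<^sup>* a b}"

lemma symp_label_step: "symp (label_step k V E T)"
  by (auto intro: sympI simp: label_step_def col_adj_commute)

lemma label_steps_coloring_label:
  "(label_step k V E T)\<^sup>*\<^sup>* a b \<Longrightarrow> coloring k V E a \<Longrightarrow> coloring k V E b \<and> label T b = label T a"
  by (induction rule: rtranclp_induct) (auto simp: label_step_def)

lemma label_class_self: "a \<in> label_class k V E T a"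
  by (simp add: label_class_def)

lemma label_class_coloring_label:
  "b \<in> label_class k V E T a \<Longrightarrow> coloring k V E a \<Longrightarrow> coloring k V E b \<and> label T b = label T a"
  unfolding label_class_def using label_steps_coloring_label by fastforce

lemma label_class_eq: "b \<in> label_class k V E T a \<Longrightarrow> label_class k V E T b = label_class k V E T a"
proof -
  assume "b \<in> label_class k V E T a"
  then have "(label_step k V E T)\<^sup>*\<^sup>* a b" "(label_step k V E T)\<^sup>*\<^sup>* b a"
    unfolding label_class_def by (auto intro: sympD[OF symp_rtranclp[OF symp_label_step]])
  then show ?thesis
    unfolding label_class_def by (blast intro: rtranclp_trans)
qed

lemma label_class_eq_iff:
  "label_class k V E T a = label_class k V E T b \<longleftrightarrow> b \<in> label_class k V E T a"
  using label_class_eq label_class_self by metis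

lemma label_class_step: "label_step k V E T a b \<Longrightarrow> label_class k V E T b = label_class k V E T a"
  by (rule label_class_eq) (simp add: label_class_def)

lemma same_label_connected_label_class:
  assumes a: "coloring k V E a"
  shows "same_label_connected k V E T (label_class k V E T a)"
proof -
  let ?S = "label_class k V E T a"
  let ?R = "\<lambda>x y. x \<in> ?S \<and> y \<in> ?S \<and> col_adj V x y"
  have "?R\<^sup>*\<^sup>* a b" if "(label_step k V E T)\<^sup>*\<^sup>* a b" for b
    using that
  proof (induction rule: rtranclp_induct)
    case (step y z)
    from step.hyps have "z \<in> ?S"
      unfolding label_class_def by (simp add: rtranclp.rtrancl_into_rtrancl)
    with step.hyps have "?R y z"
      unfolding label_class_def label_step_def by simp
    with step.IH show ?case by (simp add: rtranclp.rtrancl_into_rtrancl)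
  qed simp
  then have reach: "?R\<^sup>*\<^sup>* a b" if "b \<in> ?S" for b
    using that by (simp add: label_class_def)
  have "symp ?R"
    by (rule sympI) (simp add: col_adj_commute)
  then have reach_back: "?R\<^sup>*\<^sup>* b a" if "b \<in> ?S" for b
    using reach[OF that] by (simp add: sympD symp_rtranclp)
  have connected: "?R\<^sup>*\<^sup>* b c" if "b \<in> ?S" "c \<in> ?S" for b c
    using reach_back[OF that(1)] reach[OF that(2)] by (rule rtranclp_trans)
  show ?thesis
    unfolding same_label_connected_def
  proof (intro conjI ballI)
    show "?S \<noteq> {}" "?S \<subseteq> {\<alpha>. coloring k V E \<alpha>}"
      using label_class_self label_class_coloring_label[OF _ a] by blast+
  next
    fix b c assume "b \<in> ?S" "c \<in> ?S"
    then show "label T b = label T c" "?R\<^sup>*\<^sup>* b c"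
      using label_class_coloring_label[OF _ a] connected by simp_all
  qed
qed

lemma same_label_connected_subset_label_class:
  assumes S: "same_label_connected k V E T S" and a: "a \<in> S"
  shows "S \<subseteq> label_class k V E T a"
proof
  fix b assume "b \<in> S"
  then have "(\<lambda>x y. x \<in> S \<and> y \<in> S \<and> col_adj V x y)\<^sup>*\<^sup>* a b"
    using S a unfolding same_label_connected_def by blast
  moreover have "label_step k V E T x y" if "x \<in> S" "y \<in> S" "col_adj V x y" for x y
    using S that unfolding same_label_connected_def label_step_def by blast
  ultimately have "(label_step k V E T)\<^sup>*\<^sup>* a b"
    by (induction rule: rtranclp_induct) (auto intro: rtranclp.rtrancl_into_rtrancl)
  then show "b \<in> label_class k V E T a" by (simp add: label_class_def)
qed

lemma label_component_iff:
  "label_component k V E T S \<longleftrightarrow> (\<exists>a. coloring k V E a \<and> S = label_class k V E T a)"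
proof
  assume S: "label_component k V E T S"
  then have slc: "same_label_connected k V E T S" by (simp add: label_component_def)
  then obtain a where "a \<in> S" "coloring k V E a"
    unfolding same_label_connected_def by blast
  with S slc show "\<exists>a. coloring k V E a \<and> S = label_class k V E T a"
    using same_label_connected_subset_label_class same_label_connected_label_class
    unfolding label_component_def by metis
next
  assume "\<exists>a. coloring k V E a \<and> S = label_class k V E T a"
  then obtain a where "coloring k V E a" "S = label_class k V E T a" by blast
  then show "label_component k V E T S"
    unfolding label_component_def
    using same_label_connected_label_class same_label_connected_subset_label_class label_class_self
    by blast
qed

lemma csg_nodes_eq: "csg_nodes k V E T = label_class k V E T ` {a. coloring k V E a}"
  unfolding csg_nodes_def label_component_iff by blast

lemma csg_label_label_class:
  "coloring k V E a \<Longrightarrow> csg_label T (label_class k V E T a) = label T a"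
  unfolding csg_label_def by (metis label_class_coloring_label label_class_self someI)

lemma csg_adj_sym: "csg_adj V x y \<Longrightarrow> csg_adj V y x"
  unfolding csg_adj_def by (metis col_adj_commute)

section \<open>Cycles and subgraphs of minimum degree two\<close>

definition cycle :: "('n \<Rightarrow> 'n \<Rightarrow> bool) \<Rightarrow> 'n list \<Rightarrow> bool" where
  "cycle A cs \<longleftrightarrow> distinct cs \<and> 3 \<le> length cs \<and>
     (\<forall>i<length cs. A (cs ! i) (cs ! (Suc i mod length cs)))"

lemma forest_iff_no_cycle: "forest N A \<longleftrightarrow> \<not> (\<exists>cs. cycle A cs \<and> set cs \<subseteq> N)"
  unfolding forest_def cycle_def by blast

definition min_degree_two :: "('n \<Rightarrow> 'n \<Rightarrow> bool) \<Rightarrow> 'n set \<Rightarrow> bool" where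
  "min_degree_two A C \<longleftrightarrow> (\<forall>x\<in>C. \<exists>y\<in>C. \<exists>z\<in>C. y \<noteq> z \<and> A x y \<and> A x z)"

lemma cycle_min_degree_two:
  assumes "symp A" and cs: "cycle A cs"
  shows "min_degree_two A (set cs)"
  unfolding min_degree_two_def
proof
  fix x assume "x \<in> set cs"
  then obtain i where i: "i < length cs" "x = cs ! i" by (auto simp: in_set_conv_nth)
  let ?n = "length cs"
  define pred where "pred = (if i = 0 then ?n - 1 else i - 1)"
  define succ where "succ = (if Suc i = ?n then 0 else Suc i)"
  have n: "3 \<le> ?n" and edges: "\<forall>i<?n. A (cs ! i) (cs ! (Suc i mod ?n))"
    using cs by (auto simp: cycle_def)
  have "pred < ?n" "succ < ?n" "pred \<noteq> succ"
    using i n by (auto simp: pred_def succ_def)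
  moreover have "Suc pred mod ?n = i" "Suc i mod ?n = succ"
    using i n by (auto simp: pred_def succ_def mod_Suc)
  ultimately have "A (cs ! i) (cs ! pred)" "A (cs ! i) (cs ! succ)" "cs ! pred \<noteq> cs ! succ"
    using edges i \<open>symp A\<close> cs by (metis sympD, metis, simp add: cycle_def nth_eq_iff_index_eq)
  then show "\<exists>y\<in>set cs. \<exists>z\<in>set cs. y \<noteq> z \<and> A x y \<and> A x z"
    using \<open>pred < ?n\<close> \<open>succ < ?n\<close> i(2) nth_mem by metis
qed

lemma cycle_take:
  assumes "distinct ps" "successively A ps" "2 \<le> j" "j < length ps" "A (ps ! j) (ps ! 0)"
  shows "cycle A (take (Suc j) ps)"
  unfolding cycle_def
proof (intro conjI allI impI)
  fix i assume "i < length (take (Suc j) ps)"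
  then have "i \<le> j" using assms(4) by simp
  then show "A (take (Suc j) ps ! i) (take (Suc j) ps ! (Suc i mod length (take (Suc j) ps)))"
    using assms(2,4,5) by (cases "i = j") (auto simp: successively_nth)
qed (use assms in auto)

lemma ex_maximal_path:
  assumes "finite C" "x \<in> C"
  obtains ps where "ps \<noteq> []" "distinct ps" "set ps \<subseteq> C" "successively A ps"
    "\<And>w. w \<in> C \<Longrightarrow> A w (hd ps) \<Longrightarrow> w \<in> set ps"
proof -
  let ?path = "\<lambda>ps. ps \<noteq> [] \<and> distinct ps \<and> set ps \<subseteq> C \<and> successively A ps"
  have "?path [x]" using assms(2) by simp
  moreover have "length ps < Suc (card C)" if "?path ps" for ps
    using that assms(1) by (metis card_mono distinct_card less_Suc_eq_le)
  ultimately obtain ps where ps: "?path ps" and longest: "\<And>qs. ?path qs \<Longrightarrow> length qs \<le> length ps"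
    using ex_has_greatest_nat[of ?path "[x]" length "Suc (card C)"] by blast
  have "w \<in> set ps" if "w \<in> C" "A w (hd ps)" for w
  proof (rule ccontr)
    assume "w \<notin> set ps"
    then have "?path (w # ps)" using ps that by (simp add: successively_Cons)
    then show False using longest by fastforce
  qed
  with ps that show ?thesis by blast
qed

lemma min_degree_two_cycle:
  assumes "symp A" "irreflp A" "finite C" "C \<noteq> {}" and deg: "min_degree_two A C"
  obtains cs where "cycle A cs" "set cs \<subseteq> C"
proof -
  obtain x where "x \<in> C" using assms(4) by blast
  then obtain ps where ps: "ps \<noteq> []" "distinct ps" "set ps \<subseteq> C" "successively A ps"
    and maximal: "\<And>w. w \<in> C \<Longrightarrow> A w (hd ps) \<Longrightarrow> w \<in> set ps"
    using ex_maximal_path assms(3) by metis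
  have hd: "hd ps = ps ! 0" using ps(1) by (rule hd_conv_nth)
  have "hd ps \<in> C" using ps by auto
  then obtain y z where yz: "y \<in> C" "z \<in> C" "y \<noteq> z" "A (ps ! 0) y" "A (ps ! 0) z"
    using deg hd by (auto simp: min_degree_two_def)
  then have "y \<in> set ps" "z \<in> set ps"
    using maximal hd sympD[OF \<open>symp A\<close>] by auto
  then obtain a b where a: "a < length ps" "ps ! a = y" and b: "b < length ps" "ps ! b = z"
    by (auto simp: in_set_conv_nth)
  have "a \<noteq> 0" "b \<noteq> 0"
    using a(2) b(2) yz(4,5) irreflpD[OF \<open>irreflp A\<close>] by (metis, metis)
  moreover have "a \<noteq> b" using a b yz(3) by auto
  ultimately have "2 \<le> max a b" by linarith
  moreover have "A (ps ! max a b) (ps ! 0)"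
    using a(2) b(2) yz(4,5) sympD[OF \<open>symp A\<close>] by (simp add: max_def)
  ultimately have "cycle A (take (Suc (max a b)) ps)"
    using cycle_take[OF ps(2,4)] a(1) b(1) by simp
  moreover have "set (take (Suc (max a b)) ps) \<subseteq> C"
    using ps(3) set_take_subset by fast
  ultimately show ?thesis using that by blast
qed

lemma forest_iff_no_min_degree_two:
  assumes "symp A" "irreflp A"
  shows "forest N A \<longleftrightarrow> \<not> (\<exists>C\<subseteq>N. finite C \<and> C \<noteq> {} \<and> min_degree_two A C)"
proof
  assume forest: "forest N A"
  show "\<not> (\<exists>C\<subseteq>N. finite C \<and> C \<noteq> {} \<and> min_degree_two A C)"
  proof (intro notI, elim exE conjE)
    fix C assume "C \<subseteq> N" "finite C" "C \<noteq> {}" "min_degree_two A C"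
    then obtain cs where "cycle A cs" "set cs \<subseteq> N"
      using min_degree_two_cycle[OF assms] by (metis subset_trans)
    with forest show False unfolding forest_iff_no_cycle by blast
  qed
next
  assume no_core: "\<not> (\<exists>C\<subseteq>N. finite C \<and> C \<noteq> {} \<and> min_degree_two A C)"
  show "forest N A"
    unfolding forest_iff_no_cycle
  proof (intro notI, elim exE conjE)
    fix cs assume "cycle A cs" "set cs \<subseteq> N"
    moreover from \<open>cycle A cs\<close> have "set cs \<noteq> {}" by (auto simp: cycle_def)
    ultimately show False
      using no_core cycle_min_degree_two[OF assms(1)] by blast
  qed
qed

section \<open>Colourings of cliques and the contracted solution graph\<close>

lemma label_eq_iff: "label T a = label T b \<longleftrightarrow> (\<forall>t\<in>T. a t = b t)"
  by (auto simp: label_def fun_eq_iff)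

lemma adj_complete_edges: "adj (complete_edges S) u w \<longleftrightarrow> u \<in> S \<and> w \<in> S \<and> u \<noteq> w"
  unfolding adj_def complete_edges_def by (auto simp: doubleton_eq_iff)

lemma coloring_complete_edges_iff:
  "coloring k S (complete_edges S) \<beta> \<longleftrightarrow>
     (\<forall>t\<in>S. \<beta> t \<in> {1..k}) \<and> (\<forall>t. t \<notin> S \<longrightarrow> \<beta> t = 0) \<and> inj_on \<beta> S"
  unfolding coloring_def adj_complete_edges inj_on_def by blast

lemma clique_coloring_inj_on: "is_clique V E T \<Longrightarrow> coloring k V E a \<Longrightarrow> inj_on a T"
  unfolding is_clique_def coloring_def inj_on_def by blast

lemma clique_coloring_label:
  assumes "is_clique V E T" "coloring k V E a"
  shows "coloring k T (complete_edges T) (label T a)"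
proof -
  have "inj_on (label T a) T"
    using clique_coloring_inj_on[OF assms] by (simp add: label_def inj_on_def)
  moreover have "T \<subseteq> V" using assms(1) by (simp add: is_clique_def)
  ultimately show ?thesis
    using assms(2) unfolding coloring_complete_edges_iff by (auto simp: coloring_def label_def)
qed

lemma clique_coloring_image:
  assumes "is_clique V E T" "coloring k V E a"
  shows "a ` T \<subseteq> {1..k}" "card (a ` T) = card T"
  using assms clique_coloring_inj_on card_image unfolding is_clique_def coloring_def by blast+

lemma card_clique_le: "is_clique V E T \<Longrightarrow> colorable k V E \<Longrightarrow> card T \<le> k"
  unfolding colorable_def using clique_coloring_image
  by (metis card_atLeastAtMost card_mono diff_Suc_1 finite_atLeastAtMost)

lemma col_adj_singleton:
  assumes "col_adj V a b"
  obtains w where "w \<in> V" "{u \<in> V. a u \<noteq> b u} = {w}"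
  using assms unfolding col_adj_def by (metis (no_types, lifting) card_1_singletonE insertI1 mem_Collect_eq)

lemma col_adj_label_neq:
  assumes "T \<subseteq> V" "col_adj V a b" "label T a \<noteq> label T b"
  obtains t where "t \<in> T" "{u \<in> V. a u \<noteq> b u} = {t}"
proof -
  obtain w where w: "{u \<in> V. a u \<noteq> b u} = {w}" using col_adj_singleton[OF assms(2)] by blast
  obtain t where "t \<in> T" "a t \<noteq> b t" using assms(3) by (auto simp: label_eq_iff)
  with w assms(1) have "t = w" by blast
  with w \<open>t \<in> T\<close> show ?thesis using that by blast
qed

lemma col_adj_fresh_colour:
  assumes T: "is_clique V E T" and b: "coloring k V E b"
    and t: "t \<in> T" "{u \<in> V. a u \<noteq> b u} = {t}"
  shows "b t \<notin> a ` T"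
proof
  assume "b t \<in> a ` T"
  then obtain u where u: "b t = a u" "u \<in> T" by (rule imageE)
  have "T \<subseteq> V" using T by (simp add: is_clique_def)
  have "a t \<noteq> b t" using t(2) by blast
  with u(1) have "u \<noteq> t" by auto
  with t(2) u(2) \<open>T \<subseteq> V\<close> have "a u = b u" by blast
  with u(1) have "b u = b t" by simp
  with u(2) t(1) have "u = t"
    using inj_onD[OF clique_coloring_inj_on[OF T b]] by blast
  with \<open>u \<noteq> t\<close> show False by contradiction
qed

lemma csg_adj_label_class_iff:
  assumes "coloring k V E a" "coloring k V E b"
  shows "csg_adj V (label_class k V E T a) (label_class k V E T b) \<longleftrightarrow>
    (\<exists>a'\<in>label_class k V E T a. \<exists>b'\<in>label_class k V E T b. col_adj V a' b' \<and> label T a' \<noteq> label T b')"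
    (is "?adj \<longleftrightarrow> ?witness")
proof
  assume ?adj
  then obtain a' b' where a'b': "a' \<in> label_class k V E T a" "b' \<in> label_class k V E T b"
    "col_adj V a' b'" and ne: "label_class k V E T a \<noteq> label_class k V E T b"
    unfolding csg_adj_def by blast
  have "label T a' \<noteq> label T b'"
  proof
    assume "label T a' = label T b'"
    then have "label_step k V E T a' b'"
      using a'b' label_class_coloring_label assms unfolding label_step_def by blast
    then show False
      using ne a'b'(1,2) label_class_step label_class_eq by metis
  qed
  with a'b' show ?witness by blast
next
  assume ?witness
  then obtain a' b' where "a' \<in> label_class k V E T a" "b' \<in> label_class k V E T b"
    "col_adj V a' b'" "label T a' \<noteq> label T b'" by blast
  moreover from this have "label_class k V E T a \<noteq> label_class k V E T b"
    using label_class_coloring_label assms label_class_eq_iff by metis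
  ultimately show ?adj unfolding csg_adj_def by blast
qed

lemma label_class_agree_on:
  "b \<in> label_class k V E T a \<Longrightarrow> coloring k V E a \<Longrightarrow> t \<in> T \<Longrightarrow> b t = a t"
  using label_class_coloring_label[of b k V E T a] by (simp add: label_eq_iff)

lemma csg_adj_label_classD:
  assumes "T \<subseteq> V" "coloring k V E a" "coloring k V E b"
    and "csg_adj V (label_class k V E T a) (label_class k V E T b)"
  shows "card {t \<in> T. a t \<noteq> b t} = 1"
proof -
  obtain a' b' where a'b': "a' \<in> label_class k V E T a" "b' \<in> label_class k V E T b"
    "col_adj V a' b'" "label T a' \<noteq> label T b'"
    using assms(4) csg_adj_label_class_iff[OF assms(2,3)] by blast
  obtain t where t: "t \<in> T" "{u \<in> V. a' u \<noteq> b' u} = {t}"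
    using col_adj_label_neq[OF assms(1) a'b'(3,4)] .
  have "{u \<in> T. a u \<noteq> b u} = {u \<in> T. a' u \<noteq> b' u}"
    using label_class_agree_on[OF a'b'(1) assms(2)] label_class_agree_on[OF a'b'(2) assms(3)]
    by (intro Collect_cong) fastforce
  also have "\<dots> = {t}" using t assms(1) by blast
  finally show ?thesis by simp
qed

lemma csg_adj_nodesE:
  assumes "T \<subseteq> V" "S1 \<in> csg_nodes k V E T" "S2 \<in> csg_nodes k V E T" "csg_adj V S1 S2"
  obtains a b t where "coloring k V E a" "coloring k V E b"
    "S1 = label_class k V E T a" "S2 = label_class k V E T b"
    "t \<in> T" "{u \<in> V. a u \<noteq> b u} = {t}"
proof -
  obtain a0 b0 where a0: "coloring k V E a0" "S1 = label_class k V E T a0"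
    and b0: "coloring k V E b0" "S2 = label_class k V E T b0"
    using assms(2,3) by (auto simp: csg_nodes_eq)
  then obtain a b where ab: "a \<in> S1" "b \<in> S2" "col_adj V a b" "label T a \<noteq> label T b"
    using assms(4) csg_adj_label_class_iff[OF a0(1) b0(1)] by blast
  have "coloring k V E a" "S1 = label_class k V E T a"
    using ab(1) a0 label_class_coloring_label[of a] label_class_eq[of a] by auto
  moreover have "coloring k V E b" "S2 = label_class k V E T b"
    using ab(2) b0 label_class_coloring_label[of b] label_class_eq[of b] by auto
  moreover obtain t where "t \<in> T" "{u \<in> V. a u \<noteq> b u} = {t}"
    using col_adj_label_neq[OF assms(1) ab(3,4)] .
  ultimately show ?thesis using that by blast
qed

lemma csg_no_adj_if_card_clique_eq:
  assumes T: "is_clique V E T" "card T = k"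
    and a: "coloring k V E a" and b: "coloring k V E b"
  shows "\<not> csg_adj V (label_class k V E T a) (label_class k V E T b)"
proof
  assume "csg_adj V (label_class k V E T a) (label_class k V E T b)"
  then obtain a' b' where "a' \<in> label_class k V E T a" "b' \<in> label_class k V E T b"
    and adj: "col_adj V a' b'" "label T a' \<noteq> label T b'"
    using csg_adj_label_class_iff[OF a b] by blast
  then have a': "coloring k V E a'" and b': "coloring k V E b'"
    using label_class_coloring_label a b by blast+
  have TV: "T \<subseteq> V" using T(1) by (simp add: is_clique_def)
  obtain t where t: "t \<in> T" "{u \<in> V. a' u \<noteq> b' u} = {t}"
    using col_adj_label_neq[OF TV adj] .
  have "a' ` T = {1..k}"
    using clique_coloring_image[OF T(1) a'] T(2) by (simp add: card_subset_eq)
  moreover have "b' t \<in> {1..k}" using b' t(1) TV by (auto simp: coloring_def)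
  ultimately show False using col_adj_fresh_colour[OF T(1) b' t] by blast
qed

lemma edgeless_forest_inj_nbhd:
  assumes "\<And>x y. x \<in> N \<Longrightarrow> y \<in> N \<Longrightarrow> \<not> A x y"
  shows "forest N A \<and> inj_nbhd N A lab"
proof
  show "forest N A"
    unfolding forest_iff_no_cycle
  proof (intro notI, elim exE conjE)
    fix cs assume cs: "cycle A cs" "set cs \<subseteq> N"
    then have n: "3 \<le> length cs" by (simp add: cycle_def)
    have "\<forall>i<length cs. A (cs ! i) (cs ! (Suc i mod length cs))"
      using cs(1) by (simp add: cycle_def)
    moreover have "0 < length cs" "1 < length cs" using n by linarith+
    ultimately have "A (cs ! 0) (cs ! (Suc 0 mod length cs))" by blast
    moreover have "Suc 0 mod length cs = 1" using n by simp
    ultimately have "A (cs ! 0) (cs ! 1)" by (simp only:)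
    moreover have "cs ! 0 \<in> set cs" "cs ! 1 \<in> set cs"
      using \<open>0 < length cs\<close> \<open>1 < length cs\<close> by auto
    with cs(2) have "cs ! 0 \<in> N" "cs ! 1 \<in> N" by blast+
    ultimately show False using assms by blast
  qed
  show "inj_nbhd N A lab" using assms by (simp add: inj_nbhd_def)
qed

lemma label_class_diff_set:
  assumes "coloring k V E a" "coloring k V E b"
  shows "{t \<in> T. csg_label T (label_class k V E T a) t \<noteq> csg_label T (label_class k V E T b) t}
    = {t \<in> T. a t \<noteq> b t}"
  using assms by (auto simp: csg_label_label_class label_def)

definition color_complete_on_colorings :: "nat \<Rightarrow> nat \<Rightarrow> 'a set \<Rightarrow> 'a set set \<Rightarrow> 'a set \<Rightarrow> bool" where
  "color_complete_on_colorings m k V E T \<longleftrightarrow> finite T \<and> card T = m \<and>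
    (\<forall>\<beta>. coloring k T (complete_edges T) \<beta> \<longrightarrow> (\<exists>a. coloring k V E a \<and> label T a = \<beta>)) \<and>
    (\<forall>a b. coloring k V E a \<longrightarrow> coloring k V E b \<longrightarrow> label T a = label T b \<longrightarrow>
       label_class k V E T a = label_class k V E T b) \<and>
    (\<forall>a b. coloring k V E a \<longrightarrow> coloring k V E b \<longrightarrow> card {t \<in> T. a t \<noteq> b t} = 1 \<longrightarrow>
       csg_adj V (label_class k V E T a) (label_class k V E T b))"

lemma label_clique_coloring_carrier:
  assumes "coloring k V E a" "T \<subseteq> V" "coloring k T0 (complete_edges T0) (label T a)"
  shows "T0 = T"
proof -
  have "label T a t \<noteq> 0 \<longleftrightarrow> t \<in> T0" for t
    using assms(3) unfolding coloring_complete_edges_iff by (cases "t \<in> T0") auto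
  moreover have "label T a t \<noteq> 0 \<longleftrightarrow> t \<in> T" for t
  proof -
    have "t \<in> T \<Longrightarrow> a t \<in> {1..k}" using assms(1,2) by (auto simp: coloring_def)
    then show ?thesis by (auto simp: label_def)
  qed
  ultimately show ?thesis by blast
qed

lemma color_complete_on_coloringsD:
  assumes T: "is_clique V E T" and col: "colorable k V E"
    and cc: "color_complete m k (csg_nodes k V E T) (csg_adj V) (csg_label T)"
  shows "color_complete_on_colorings m k V E T"
proof -
  obtain T0 where T0: "finite T0" "card T0 = m"
    and labels: "\<forall>x\<in>csg_nodes k V E T. coloring k T0 (complete_edges T0) (csg_label T x)"
    and unique: "\<forall>\<beta>. coloring k T0 (complete_edges T0) \<beta> \<longrightarrow>
        (\<exists>!x. x \<in> csg_nodes k V E T \<and> csg_label T x = \<beta>)"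
    and adj: "\<forall>x\<in>csg_nodes k V E T. \<forall>y\<in>csg_nodes k V E T.
        csg_adj V x y \<longleftrightarrow> card {t \<in> T0. csg_label T x t \<noteq> csg_label T y t} = 1"
    using cc unfolding color_complete_def by blast
  obtain \<alpha> where \<alpha>: "coloring k V E \<alpha>" using col by (auto simp: colorable_def)
  have "label_class k V E T \<alpha> \<in> csg_nodes k V E T"
    using \<alpha> by (simp add: csg_nodes_eq)
  then have "coloring k T0 (complete_edges T0) (label T \<alpha>)"
    using labels csg_label_label_class[OF \<alpha>] by metis
  moreover have "T \<subseteq> V" using T by (simp add: is_clique_def)
  ultimately have "T0 = T" using label_clique_coloring_carrier[OF \<alpha>] by blast
  show ?thesis
    unfolding color_complete_on_colorings_def
  proof (intro conjI allI impI)
    show "finite T" "card T = m" using T0 \<open>T0 = T\<close> by simp_all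
  next
    fix \<beta> assume "coloring k T (complete_edges T) \<beta>"
    then obtain x where "x \<in> csg_nodes k V E T" "csg_label T x = \<beta>"
      using unique \<open>T0 = T\<close> by blast
    then show "\<exists>a. coloring k V E a \<and> label T a = \<beta>"
      by (auto simp: csg_nodes_eq csg_label_label_class)
  next
    fix a b assume ab: "coloring k V E a" "coloring k V E b" "label T a = label T b"
    then have "label_class k V E T a \<in> csg_nodes k V E T" "label_class k V E T b \<in> csg_nodes k V E T"
      by (simp_all add: csg_nodes_eq)
    moreover have "\<exists>!x. x \<in> csg_nodes k V E T \<and> csg_label T x = label T a"
      using unique clique_coloring_label[OF T ab(1)] \<open>T0 = T\<close> by blast
    ultimately show "label_class k V E T a = label_class k V E T b"
      using ab csg_label_label_class by metis
  next
    fix a b assume ab: "coloring k V E a" "coloring k V E b" "card {t \<in> T. a t \<noteq> b t} = 1"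
    then have "label_class k V E T a \<in> csg_nodes k V E T" "label_class k V E T b \<in> csg_nodes k V E T"
      by (simp_all add: csg_nodes_eq)
    with adj \<open>T0 = T\<close> label_class_diff_set[OF ab(1,2)] ab(3)
    show "csg_adj V (label_class k V E T a) (label_class k V E T b)" by simp
  qed
qed

lemma color_complete_on_coloringsI:
  assumes T: "is_clique V E T" and cc: "color_complete_on_colorings m k V E T"
  shows "color_complete m k (csg_nodes k V E T) (csg_adj V) (csg_label T)"
proof -
  have fin: "finite T" "card T = m"
    and surj: "\<And>\<beta>. coloring k T (complete_edges T) \<beta> \<Longrightarrow> \<exists>a. coloring k V E a \<and> label T a = \<beta>"
    and uniq: "\<And>a b. coloring k V E a \<Longrightarrow> coloring k V E b \<Longrightarrow> label T a = label T b \<Longrightarrow>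
        label_class k V E T a = label_class k V E T b"
    and adj: "\<And>a b. coloring k V E a \<Longrightarrow> coloring k V E b \<Longrightarrow> card {t \<in> T. a t \<noteq> b t} = 1 \<Longrightarrow>
        csg_adj V (label_class k V E T a) (label_class k V E T b)"
    using cc unfolding color_complete_on_colorings_def by blast+
  have TV: "T \<subseteq> V" using T by (simp add: is_clique_def)
  show ?thesis
    unfolding color_complete_def
  proof (intro exI[of _ T] conjI allI impI ballI)
    fix x assume "x \<in> csg_nodes k V E T"
    then show "coloring k T (complete_edges T) (csg_label T x)"
      using clique_coloring_label[OF T] by (auto simp: csg_nodes_eq csg_label_label_class)
  next
    fix \<beta> assume "coloring k T (complete_edges T) \<beta>"
    then obtain a where a: "coloring k V E a" "label T a = \<beta>" using surj by blast
    show "\<exists>!x. x \<in> csg_nodes k V E T \<and> csg_label T x = \<beta>"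
    proof (rule ex1I)
      show "label_class k V E T a \<in> csg_nodes k V E T \<and> csg_label T (label_class k V E T a) = \<beta>"
        using a by (simp add: csg_nodes_eq csg_label_label_class)
    next
      fix y assume "y \<in> csg_nodes k V E T \<and> csg_label T y = \<beta>"
      then obtain b where "coloring k V E b" "y = label_class k V E T b" "label T b = \<beta>"
        by (auto simp: csg_nodes_eq csg_label_label_class)
      then show "y = label_class k V E T a" using uniq a by metis
    qed
  next
    fix x y assume "x \<in> csg_nodes k V E T" "y \<in> csg_nodes k V E T"
    then obtain a b where ab: "coloring k V E a" "coloring k V E b"
      and xy: "x = label_class k V E T a" "y = label_class k V E T b"
      by (auto simp: csg_nodes_eq)
    show "csg_adj V x y \<longleftrightarrow> card {t \<in> T. csg_label T x t \<noteq> csg_label T y t} = 1"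
      unfolding xy label_class_diff_set[OF ab]
      using adj ab csg_adj_label_classD[OF TV ab] by blast
  qed (use fin in auto)
qed

lemma card_2_eq_doubleton:
  assumes "card A = 2" "x \<in> A" "y \<in> A" "x \<noteq> y"
  shows "A = {x, y}"
proof -
  have "finite A" using assms(1) by (cases "finite A") auto
  with assms show ?thesis by (intro card_subset_eq[symmetric]) auto
qed

lemma card_2_Int_eq:
  assumes "card A = 2" "card B = 2" "A \<noteq> B" "x \<in> A \<inter> B" "y \<in> A \<inter> B"
  shows "x = y"
proof (rule ccontr)
  assume "x \<noteq> y"
  moreover have "x \<in> A" "y \<in> A" "x \<in> B" "y \<in> B" using assms(4,5) by simp_all
  ultimately have "A = {x, y}" "B = {x, y}"
    using card_2_eq_doubleton[OF assms(1)] card_2_eq_doubleton[OF assms(2)] by blast+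
  with assms(3) show False by simp
qed

lemma symp_csg_adj: "symp (csg_adj V)"
  by (rule sympI) (rule csg_adj_sym)

lemma irreflp_csg_adj: "irreflp (csg_adj V)"
  by (rule irreflpI) (simp add: csg_adj_def)

section \<open>Introducing a vertex\<close>

lemma rtranclp_map_invariant:
  assumes "\<And>x y. R x y \<Longrightarrow> I x \<Longrightarrow> S (f x) (f y) \<and> I y" "R\<^sup>*\<^sup>* a b" "I a"
  shows "S\<^sup>*\<^sup>* (f a) (f b) \<and> I b"
  using assms(2,3)
  by (induction rule: rtranclp_induct) (auto dest: assms(1) intro: rtranclp.rtrancl_into_rtrancl)

locale introduce_vertex =
  fixes V :: "'a set" and E :: "'a set set" and T :: "'a set" and v :: 'a and k :: nat
  assumes sgraph: "sgraph V E" and clique: "is_clique V E T" and v_in_T: "v \<in> T"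
    and neighbors_v: "neighbors V E v \<subseteq> T"
begin

abbreviation "V' \<equiv> V - {v}"
abbreviation "E' \<equiv> {e \<in> E. v \<notin> e}"
abbreviation "T' \<equiv> T - {v}"
abbreviation "col \<equiv> coloring k V E"
abbreviation "col' \<equiv> coloring k V' E'"
abbreviation "cls \<equiv> label_class k V E T"
abbreviation "cls' \<equiv> label_class k V' E' T'"
abbreviation "nodes \<equiv> csg_nodes k V E T"
abbreviation "nodes' \<equiv> csg_nodes k V' E' T'"

lemma T_subset_V: "T \<subseteq> V"
  using clique by (simp add: is_clique_def)

lemma v_in_V: "v \<in> V"
  using T_subset_V v_in_T by blast

lemma finite_T: "finite T"
  using sgraph T_subset_V finite_subset by (auto simp: sgraph_def)

lemma not_adj_self: "\<not> adj E x x"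
  using sgraph unfolding sgraph_def adj_def by (metis insert_absorb2 doubleton_eq_iff)

lemma adj_E': "u \<noteq> v \<Longrightarrow> w \<noteq> v \<Longrightarrow> adj E' u w \<longleftrightarrow> adj E u w"
  by (simp add: adj_def)

lemma clique_T': "is_clique V' E' T'"
  using clique adj_E' by (auto simp: is_clique_def)

lemma coloring_restrict: "col a \<Longrightarrow> col' (a(v := 0))"
  unfolding coloring_def using adj_E' by auto

lemma coloring_restrict_v: "col' d \<Longrightarrow> d v = 0"
  by (simp add: coloring_def)

lemma card_T_eq_Suc: "card T = Suc (card T')"
  by (rule card_Suc_Diff1[OF finite_T v_in_T, symmetric])

lemma colorable_restrict: "colorable k V E \<Longrightarrow> colorable k V' E'"
  unfolding colorable_def using coloring_restrict by blast

lemma coloring_v_notin_T': "col a \<Longrightarrow> a v \<notin> a ` T'"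
  using clique_coloring_inj_on[OF clique] v_in_T by (auto simp: inj_on_def)

\<comment> \<open>the neighbours of \<open>v\<close> lie in \<open>T\<close>, so avoiding the colours of \<open>T'\<close> is all \<open>v\<close> has to do\<close>
lemma coloring_extend:
  assumes d: "col' d" and c: "c \<in> {1..k}" "c \<notin> d ` T'"
  shows "col (d(v := c))"
  unfolding coloring_def
proof (intro conjI ballI allI impI)
  fix u w assume uw: "u \<in> V" "w \<in> V" "adj E u w"
  have v_adj: "x \<in> T'" if "x \<in> V" "adj E v x" for x
    using neighbors_v that not_adj_self by (auto simp: neighbors_def)
  show "(d(v := c)) u \<noteq> (d(v := c)) w"
  proof (cases "u = v \<or> w = v")
    case True
    then show ?thesis
      using uw v_adj c(2) not_adj_self by (auto simp: adj_def insert_commute)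
  next
    case False
    then show ?thesis using d uw adj_E' by (auto simp: coloring_def)
  qed
qed (use d c v_in_V in \<open>auto simp: coloring_def\<close>)

lemma col_adj_restrict:
  "a v = b v \<Longrightarrow> col_adj V a b \<longleftrightarrow> col_adj V' (a(v := 0)) (b(v := 0))"
  unfolding col_adj_def by (rule arg_cong[where f = "\<lambda>S. card S = 1"]) auto

lemma col_adj_extend: "col_adj V (d(v := c)) (e(v := c)) \<longleftrightarrow> col_adj V' d e"
  unfolding col_adj_def by (rule arg_cong[where f = "\<lambda>S. card S = 1"]) auto

lemma label_eq_iff_restrict:
  "label T a = label T b \<longleftrightarrow> a v = b v \<and> label T' (a(v := 0)) = label T' (b(v := 0))"
  using v_in_T by (auto simp: label_eq_iff)

lemma label_step_restrict:
  assumes "label_step k V E T a b"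
  shows "label_step k V' E' T' (a(v := 0)) (b(v := 0)) \<and> a v = b v"
  using assms coloring_restrict label_eq_iff_restrict col_adj_restrict
  unfolding label_step_def by blast

lemma label_step_extend:
  assumes step: "label_step k V' E' T' d e" and dc: "col (d(v := c))"
  shows "label_step k V E T (d(v := c)) (e(v := c))"
proof -
  have d: "col' d" and e: "col' e" and "label T' d = label T' e" and "col_adj V' d e"
    using step by (auto simp: label_step_def)
  moreover have "c \<in> {1..k}" "c \<notin> d ` T'"
    using dc v_in_V coloring_v_notin_T'[OF dc] by (auto simp: coloring_def)
  moreover from this \<open>label T' d = label T' e\<close> have "c \<notin> e ` T'"
    by (auto simp: label_eq_iff)
  ultimately have "col (e(v := c))" using coloring_extend by blast
  moreover have "(d(v := c))(v := 0) = d" "(e(v := c))(v := 0) = e"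
    using coloring_restrict_v d e by auto
  then have "label T (d(v := c)) = label T (e(v := c))"
    using \<open>label T' d = label T' e\<close> label_eq_iff_restrict by simp
  ultimately show ?thesis
    using dc \<open>col_adj V' d e\<close> col_adj_extend unfolding label_step_def by blast
qed

lemma label_class_restrict:
  assumes "b \<in> cls a"
  shows "b(v := 0) \<in> cls' (a(v := 0)) \<and> b v = a v"
proof -
  have step: "label_step k V' E' T' (x(v := 0)) (y(v := 0)) \<and> y v = a v"
    if "label_step k V E T x y" "x v = a v" for x y
    using label_step_restrict[OF that(1)] that(2) by simp
  have "(label_step k V E T)\<^sup>*\<^sup>* a b" using assms by (simp add: label_class_def)
  from rtranclp_map_invariant[where R = "label_step k V E T" and S = "label_step k V' E' T'"
      and I = "\<lambda>x. x v = a v" and f = "\<lambda>b. b(v := 0)",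
      OF step this refl]
  show ?thesis by (simp add: label_class_def)
qed

lemma label_class_extend:
  assumes a: "col a" and e: "e \<in> cls' (a(v := 0))"
  shows "e(v := a v) \<in> cls a"
proof -
  have step: "label_step k V E T (x(v := a v)) (y(v := a v)) \<and> col (y(v := a v))"
    if "label_step k V' E' T' x y" "col (x(v := a v))" for x y
    using label_step_extend[OF that] unfolding label_step_def by blast
  have "(label_step k V' E' T')\<^sup>*\<^sup>* (a(v := 0)) e" using e by (simp add: label_class_def)
  moreover have "col ((a(v := 0))(v := a v))" using a by simp
  ultimately have "(label_step k V E T)\<^sup>*\<^sup>* ((a(v := 0))(v := a v)) (e(v := a v))"
    using rtranclp_map_invariant[where R = "label_step k V' E' T'" and S = "label_step k V E T"
      and I = "\<lambda>d. col (d(v := a v))" and f = "\<lambda>d. d(v := a v)",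
      OF step] by blast
  then show ?thesis by (simp add: label_class_def)
qed

lemma label_class_eq_iff_restrict:
  assumes "col a" "col b"
  shows "cls a = cls b \<longleftrightarrow> cls' (a(v := 0)) = cls' (b(v := 0)) \<and> a v = b v"
proof
  assume "cls a = cls b"
  then have "b \<in> cls a" by (simp add: label_class_eq_iff)
  from label_class_restrict[OF this]
  show "cls' (a(v := 0)) = cls' (b(v := 0)) \<and> a v = b v"
    by (simp add: label_class_eq_iff)
next
  assume restr: "cls' (a(v := 0)) = cls' (b(v := 0)) \<and> a v = b v"
  then have "b(v := 0) \<in> cls' (a(v := 0))" by (simp add: label_class_eq_iff)
  from label_class_extend[OF assms(1) this] restr have "b \<in> cls a" by simp
  then show "cls a = cls b" by (simp add: label_class_eq_iff)
qed

lemma label_class_image_restrict: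
  assumes "col a"
  shows "(\<lambda>b. b(v := 0)) ` cls a = cls' (a(v := 0))"
proof
  show "(\<lambda>b. b(v := 0)) ` cls a \<subseteq> cls' (a(v := 0))"
    using label_class_restrict by blast
  show "cls' (a(v := 0)) \<subseteq> (\<lambda>b. b(v := 0)) ` cls a"
  proof
    fix e assume e: "e \<in> cls' (a(v := 0))"
    then have "e v = 0"
      using label_class_coloring_label coloring_restrict[OF assms] coloring_restrict_v by blast
    then have "e = (e(v := a v))(v := 0)" by auto
    with label_class_extend[OF assms e] show "e \<in> (\<lambda>b. b(v := 0)) ` cls a" by blast
  qed
qed

lemma csg_adj_extend:
  assumes a: "col a" and b: "col b" and ab: "a v = b v"
    and adj: "csg_adj V' (cls' (a(v := 0))) (cls' (b(v := 0)))"
  shows "csg_adj V (cls a) (cls b)"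
proof -
  obtain d e where d: "d \<in> cls' (a(v := 0))" and e: "e \<in> cls' (b(v := 0))"
    and "col_adj V' d e" and ne: "cls' (a(v := 0)) \<noteq> cls' (b(v := 0))"
    using adj by (auto simp: csg_adj_def)
  have "d(v := a v) \<in> cls a" "e(v := a v) \<in> cls b"
    using label_class_extend[OF a d] label_class_extend[OF b e] ab by simp_all
  moreover have "col_adj V (d(v := a v)) (e(v := a v))"
    using \<open>col_adj V' d e\<close> col_adj_extend by blast
  moreover have "cls a \<noteq> cls b"
    using ne label_class_eq_iff_restrict[OF a b] by blast
  ultimately show ?thesis unfolding csg_adj_def by blast
qed

lemma recolour_v:
  assumes a: "col a" and b: "col b" and agree: "\<forall>t\<in>T'. a t = b t"
  shows "col (a(v := b v))" "label T (a(v := b v)) = label T b"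
    and "a v \<noteq> b v \<Longrightarrow> col_adj V a (a(v := b v))"
proof -
  have "b v \<in> {1..k}" using b v_in_V by (auto simp: coloring_def)
  moreover have "b v \<notin> (a(v := 0)) ` T'"
    using coloring_v_notin_T'[OF b] agree by auto
  ultimately have "col ((a(v := 0))(v := b v))"
    using coloring_extend[OF coloring_restrict[OF a]] by blast
  then show "col (a(v := b v))" by simp
  show "label T (a(v := b v)) = label T b" using agree by (auto simp: label_eq_iff)
  assume "a v \<noteq> b v"
  then have "{u \<in> V. a u \<noteq> (a(v := b v)) u} = {v}" using v_in_V by auto
  then show "col_adj V a (a(v := b v))" by (simp add: col_adj_def)
qed

lemma label_classes_unique_extend:
  assumes uniq': "\<And>d e. col' d \<Longrightarrow> col' e \<Longrightarrow> label T' d = label T' e \<Longrightarrow> cls' d = cls' e"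
    and a: "col a" and b: "col b" and ab: "label T a = label T b"
  shows "cls a = cls b"
  using ab uniq'[OF coloring_restrict[OF a] coloring_restrict[OF b]]
  by (simp add: label_eq_iff_restrict label_class_eq_iff_restrict[OF a b])

lemma labels_surj_extend:
  assumes surj': "\<And>\<beta>. coloring k T' (complete_edges T') \<beta> \<Longrightarrow> \<exists>d. col' d \<and> label T' d = \<beta>"
    and \<beta>: "coloring k T (complete_edges T) \<beta>"
  shows "\<exists>a. col a \<and> label T a = \<beta>"
proof -
  have \<beta>_K: "\<forall>t\<in>T. \<beta> t \<in> {1..k}" "\<forall>t. t \<notin> T \<longrightarrow> \<beta> t = 0" "inj_on \<beta> T"
    using \<beta> unfolding coloring_complete_edges_iff by blast+
  then have "coloring k T' (complete_edges T') (\<beta>(v := 0))"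
    unfolding coloring_complete_edges_iff by (auto simp: inj_on_def)
  then obtain d where d: "col' d" "label T' d = \<beta>(v := 0)" using surj' by blast
  then have d_T': "\<forall>t\<in>T'. d t = \<beta> t"
    by (auto simp: label_eq_iff[symmetric] label_def fun_eq_iff split: if_splits)
  have "\<beta> v \<in> {1..k}" "\<beta> v \<notin> d ` T'"
    using \<beta>_K v_in_T d_T' by (auto simp: inj_on_def)
  then have "col (d(v := \<beta> v))" using coloring_extend[OF d(1)] by blast
  moreover have "label T (d(v := \<beta> v)) = \<beta>"
    using d_T' \<beta>_K(2) by (auto simp: label_def fun_eq_iff)
  ultimately show ?thesis by blast
qed

lemma csg_adj_extend_complete:
  assumes uniq: "\<And>a b. col a \<Longrightarrow> col b \<Longrightarrow> label T a = label T b \<Longrightarrow> cls a = cls b"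
    and adj': "\<And>d e. col' d \<Longrightarrow> col' e \<Longrightarrow> card {t \<in> T'. d t \<noteq> e t} = 1 \<Longrightarrow>
        csg_adj V' (cls' d) (cls' e)"
    and a: "col a" and b: "col b" and diff: "card {t \<in> T. a t \<noteq> b t} = 1"
  shows "csg_adj V (cls a) (cls b)"
proof -
  obtain t where t: "{u \<in> T. a u \<noteq> b u} = {t}" using diff by (rule card_1_singletonE)
  show ?thesis
  proof (cases "t = v")
    case True
    with t have agree: "\<forall>u\<in>T'. a u = b u" and "a v \<noteq> b v" by auto
    note e = recolour_v[OF a b agree]
    have "a(v := b v) \<in> cls b"
      using uniq[OF e(1) b e(2)] label_class_self by metis
    moreover have "label T a \<noteq> label T (a(v := b v))"
      using \<open>a v \<noteq> b v\<close> v_in_T by (auto simp: label_eq_iff)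
    ultimately show ?thesis
      using csg_adj_label_class_iff[OF a b] label_class_self e(3)[OF \<open>a v \<noteq> b v\<close>] by blast
  next
    case False
    with t have "v \<notin> {u \<in> T. a u \<noteq> b u}" by simp
    with v_in_T have "a v = b v" by simp
    from t False have "{u \<in> T'. (a(v := 0)) u \<noteq> (b(v := 0)) u} = {t}" by auto
    then have "csg_adj V' (cls' (a(v := 0))) (cls' (b(v := 0)))"
      using adj' coloring_restrict[OF a] coloring_restrict[OF b] by simp
    then show ?thesis using csg_adj_extend[OF a b \<open>a v = b v\<close>] by blast
  qed
qed

lemma color_complete_introduce:
  assumes k: "2 \<le> k" and colorable: "colorable k V E"
    and cc': "color_complete (k - 2) k nodes' (csg_adj V') (csg_label T')"
  shows "color_complete (k - 1) k nodes (csg_adj V) (csg_label T)"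
proof -
  have "color_complete_on_colorings (k - 2) k V' E' T'"
    using color_complete_on_coloringsD[OF clique_T' colorable_restrict[OF colorable] cc'] .
  then have "card T' = k - 2"
    and surj': "\<And>\<beta>. coloring k T' (complete_edges T') \<beta> \<Longrightarrow> \<exists>d. col' d \<and> label T' d = \<beta>"
    and uniq': "\<And>d e. col' d \<Longrightarrow> col' e \<Longrightarrow> label T' d = label T' e \<Longrightarrow> cls' d = cls' e"
    and adj': "\<And>d e. col' d \<Longrightarrow> col' e \<Longrightarrow> card {t \<in> T'. d t \<noteq> e t} = 1 \<Longrightarrow>
      csg_adj V' (cls' d) (cls' e)"
    unfolding color_complete_on_colorings_def by blast+
  have "card T = k - 1" using card_T_eq_Suc \<open>card T' = k - 2\<close> k by simp
  note uniq = label_classes_unique_extend[OF uniq']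
  have "color_complete_on_colorings (k - 1) k V E T"
    unfolding color_complete_on_colorings_def
  proof (intro conjI allI impI)
    show "finite T" "card T = k - 1" by (fact finite_T, fact)
  next
    fix \<beta> assume "coloring k T (complete_edges T) \<beta>"
    then show "\<exists>a. col a \<and> label T a = \<beta>" using labels_surj_extend[OF surj'] by blast
  next
    fix a b assume "col a" "col b" "label T a = label T b"
    then show "cls a = cls b" using uniq by blast
  next
    fix a b assume "col a" "col b" "card {t \<in> T. a t \<noteq> b t} = 1"
    then show "csg_adj V (cls a) (cls b)" using csg_adj_extend_complete[OF uniq adj'] by blast
  qed
  then show ?thesis by (rule color_complete_on_coloringsI[OF clique])
qed

lemma vertex_cut_T':
  assumes "T \<noteq> V"
  shows "vertex_cut V E T'"
  unfolding vertex_cut_def connected_on_def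
proof (intro conjI notI)
  show "T' \<subseteq> V" using T_subset_V by blast
  obtain w where w: "w \<in> V" "w \<notin> T" using T_subset_V assms by blast
  let ?R = "\<lambda>x y. x \<in> V - T' \<and> y \<in> V - T' \<and> adj E x y"
  assume "\<forall>x\<in>V - T'. \<forall>y\<in>V - T'. ?R\<^sup>*\<^sup>* x y"
  then have "?R\<^sup>*\<^sup>* v w" using v_in_V w by blast
  then show False
  proof (cases rule: converse_rtranclpE)
    case base then show False using w v_in_T by simp
  next
    case (step y)
    then have "y \<in> neighbors V E v" by (simp add: neighbors_def)
    with step show False using neighbors_v not_adj_self by blast
  qed
qed

lemma card_T'_eq:
  assumes "l_connected (k - 2) V E" "colorable k V E" "T \<noteq> V" "card T \<noteq> k"
  shows "card T' = k - 2"
proof -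
  have "card T \<le> k" using card_clique_le[OF clique assms(2)] .
  moreover have "k - 2 \<le> card T'"
    using vertex_cut_T'[OF assms(3)] assms(1) by (simp add: l_connected_def)
  ultimately show ?thesis using card_T_eq_Suc assms(4) by linarith
qed

end

section \<open>Two free colours for the introduced vertex\<close>

locale two_free_colours = introduce_vertex +
  assumes card_T': "card T' = k - 2" and two_le_k: "2 \<le> k"
begin

definition proj :: "('a \<Rightarrow> nat) set \<Rightarrow> ('a \<Rightarrow> nat) set" where
  "proj S = (\<lambda>a. a(v := 0)) ` S"

definition colour_v :: "('a \<Rightarrow> nat) set \<Rightarrow> nat" where
  "colour_v S = csg_label T S v"

definition free_colours :: "('a \<Rightarrow> nat) set \<Rightarrow> nat set" where
  "free_colours X = {1..k} - csg_label T' X ` T'"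

lemma proj_label_class: "col a \<Longrightarrow> proj (cls a) = cls' (a(v := 0))"
  unfolding proj_def by (rule label_class_image_restrict)

lemma colour_v_label_class: "col a \<Longrightarrow> colour_v (cls a) = a v"
  using v_in_T by (simp add: colour_v_def csg_label_label_class label_def)

lemma free_colours_label_class: "col' d \<Longrightarrow> free_colours (cls' d) = {1..k} - d ` T'"
  by (simp add: free_colours_def csg_label_label_class label_def)

lemma csg_label_proj: "S \<in> nodes \<Longrightarrow> csg_label T' (proj S) = (csg_label T S)(v := 0)"
  using coloring_restrict
  by (auto simp: csg_nodes_eq proj_label_class csg_label_label_class label_def fun_eq_iff)

lemma proj_node: "S \<in> nodes \<Longrightarrow> proj S \<in> nodes'"
  using coloring_restrict by (auto simp: csg_nodes_eq proj_label_class)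

lemma node_eqI:
  assumes "S1 \<in> nodes" "S2 \<in> nodes" "proj S1 = proj S2" "colour_v S1 = colour_v S2"
  shows "S1 = S2"
proof -
  obtain a b where "col a" "col b" "S1 = cls a" "S2 = cls b"
    using assms(1,2) by (auto simp: csg_nodes_eq)
  with assms(3,4) label_class_eq_iff_restrict show ?thesis
    by (simp add: proj_label_class colour_v_label_class)
qed

lemma card_free_colours: "X \<in> nodes' \<Longrightarrow> card (free_colours X) = 2"
proof -
  assume "X \<in> nodes'"
  then obtain d where d: "col' d" "X = cls' d" by (auto simp: csg_nodes_eq)
  have "d ` T' \<subseteq> {1..k}" "card (d ` T') = k - 2"
    using clique_coloring_image[OF clique_T' d(1)] card_T' by simp_all
  then have "card ({1..k} - d ` T') = 2"
    using two_le_k by (simp add: card_Diff_subset finite_subset)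
  then show ?thesis using d free_colours_label_class by simp
qed

lemma colour_v_free: "S \<in> nodes \<Longrightarrow> colour_v S \<in> free_colours (proj S)"
proof -
  assume "S \<in> nodes"
  then obtain a where a: "col a" "S = cls a" by (auto simp: csg_nodes_eq)
  then have "a v \<in> {1..k} - a ` T'"
    using coloring_v_notin_T' v_in_V by (auto simp: coloring_def)
  moreover have "(a(v := 0)) ` T' = a ` T'" by auto
  ultimately show ?thesis
    using a coloring_restrict
    by (simp add: colour_v_label_class proj_label_class free_colours_label_class)
qed

lemma free_colours_proj: "col a \<Longrightarrow> free_colours (proj (cls a)) = {1..k} - a ` T'"
proof -
  assume a: "col a"
  have "(a(v := 0)) ` T' = a ` T'" by auto
  with a coloring_restrict show ?thesis by (simp add: proj_label_class free_colours_label_class)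
qed

lemma csg_adj_cases:
  assumes S1: "S1 \<in> nodes" and S2: "S2 \<in> nodes" and adj: "csg_adj V S1 S2"
  shows "proj S1 = proj S2 \<and> colour_v S1 \<noteq> colour_v S2 \<or>
    csg_adj V' (proj S1) (proj S2) \<and> colour_v S1 = colour_v S2 \<and>
    free_colours (proj S1) \<noteq> free_colours (proj S2)"
proof -
  obtain a b w where "col a" "col b" "S1 = cls a" "S2 = cls b"
    and w: "w \<in> T" "{u \<in> V. a u \<noteq> b u} = {w}"
    by (rule csg_adj_nodesE[OF T_subset_V S1 S2 adj])
  then have a: "col a" "S1 = cls a" and b: "col b" "S2 = cls b" by simp_all
  have agree: "a u = b u" if "u \<in> V" "u \<noteq> w" for u
    using w(2) that by blast
  show ?thesis
  proof (cases "w = v")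
    case True
    have "a(v := 0) = b(v := 0)"
    proof
      fix u show "(a(v := 0)) u = (b(v := 0)) u"
        using agree a(1) b(1) True by (cases "u \<in> V") (auto simp: coloring_def)
    qed
    moreover have "a v \<noteq> b v" using w True by blast
    ultimately show ?thesis using a b by (simp add: proj_label_class colour_v_label_class)
  next
    case False
    then have "w \<in> T'" "a v = b v" using w(1) agree[OF v_in_V] by auto
    have "col_adj V a b" using w(2) by (simp add: col_adj_def)
    then have "col_adj V' (a(v := 0)) (b(v := 0))"
      using col_adj_restrict[of a b, OF \<open>a v = b v\<close>] by blast
    moreover have "label T' (a(v := 0)) \<noteq> label T' (b(v := 0))"
      using w \<open>w \<in> T'\<close> by (auto simp: label_eq_iff)
    ultimately have "csg_adj V' (cls' (a(v := 0))) (cls' (b(v := 0)))"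
      using csg_adj_label_class_iff[OF coloring_restrict[OF a(1)] coloring_restrict[OF b(1)]]
        label_class_self by blast
    \<comment> \<open>the new colour of \<open>w\<close> is free over \<open>proj S1\<close> but used over \<open>proj S2\<close>\<close>
    have "b w \<notin> a ` T" by (rule col_adj_fresh_colour[OF clique b(1) w])
    moreover have "b w \<in> {1..k}" using b(1) w(1) T_subset_V by (auto simp: coloring_def)
    ultimately have "b w \<in> free_colours (proj S1)" using a by (auto simp: free_colours_proj)
    moreover have "b w \<notin> free_colours (proj S2)" using \<open>w \<in> T'\<close> b by (simp add: free_colours_proj)
    ultimately have "free_colours (proj S1) \<noteq> free_colours (proj S2)" by blast
    with \<open>csg_adj V' _ _\<close> show ?thesis
      using a b \<open>a v = b v\<close> by (simp add: proj_label_class colour_v_label_class)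
  qed
qed

lemma fibre_card_le_two:
  assumes "S1 \<in> nodes" "S2 \<in> nodes" "S3 \<in> nodes" "proj S2 = proj S1" "proj S3 = proj S1"
    and "S1 \<noteq> S2" "S1 \<noteq> S3"
  shows "S2 = S3"
proof -
  have "colour_v S1 \<noteq> colour_v S2" "colour_v S1 \<noteq> colour_v S3"
    using node_eqI[OF assms(1,2) assms(4)[symmetric]] node_eqI[OF assms(1,3) assms(5)[symmetric]]
      assms(6,7) by blast+
  moreover have "card (free_colours (proj S1)) = 2"
    using card_free_colours[OF proj_node[OF assms(1)]] .
  then obtain x y where "free_colours (proj S1) = {x, y}" by (auto simp: card_2_iff)
  moreover have "colour_v S1 \<in> free_colours (proj S1)" "colour_v S2 \<in> free_colours (proj S1)"
    "colour_v S3 \<in> free_colours (proj S1)"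
    using colour_v_free[OF assms(1)] colour_v_free[OF assms(2)] colour_v_free[OF assms(3)]
      assms(4,5) by simp_all
  ultimately have "colour_v S2 = colour_v S3" by auto
  then show ?thesis using node_eqI[OF assms(2,3)] assms(4,5) by simp
qed

lemma proj_csg_adj:
  assumes "S1 \<in> nodes" "S2 \<in> nodes" "csg_adj V S1 S2" "proj S1 \<noteq> proj S2"
  shows "csg_adj V' (proj S1) (proj S2)"
  using csg_adj_cases[OF assms(1-3)] assms(4) by blast

\<comment> \<open>both edges project onto the same edge, and \<open>v\<close> keeps the unique colour free over both of its ends\<close>
lemma cross_edge_unique:
  assumes nodes: "S1 \<in> nodes" "S2 \<in> nodes" "S1' \<in> nodes" "S2' \<in> nodes"
    and adj: "csg_adj V S1 S2" "csg_adj V S1' S2'"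
    and proj: "proj S1' = proj S1" "proj S2' = proj S2" "proj S1 \<noteq> proj S2"
  shows "S1' = S1"
proof -
  have "proj S1' \<noteq> proj S2'" using proj by simp
  then have "colour_v S1' = colour_v S2'"
    using csg_adj_cases[OF nodes(3,4) adj(2)] by blast
  moreover have "colour_v S1 = colour_v S2"
    and free: "free_colours (proj S1) \<noteq> free_colours (proj S2)"
    using csg_adj_cases[OF nodes(1,2) adj(1)] proj(3) by blast+
  ultimately have "colour_v S1 \<in> free_colours (proj S1) \<inter> free_colours (proj S2)"
    "colour_v S1' \<in> free_colours (proj S1) \<inter> free_colours (proj S2)"
    using colour_v_free[OF nodes(1)] colour_v_free[OF nodes(2)] colour_v_free[OF nodes(3)]
      colour_v_free[OF nodes(4)] proj(1,2) by simp_all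
  with free have "colour_v S1' = colour_v S1"
    using card_2_Int_eq[OF card_free_colours[OF proj_node[OF nodes(1)]]
        card_free_colours[OF proj_node[OF nodes(2)]]] by blast
  with proj(1) show ?thesis using node_eqI nodes(1,3) by blast
qed

lemma cross_neighbour:
  assumes C: "C \<subseteq> nodes" "min_degree_two (csg_adj V) C" and S: "S \<in> C"
  obtains w where "w \<in> C" "csg_adj V S w" "proj w \<noteq> proj S"
proof -
  obtain y z where yz: "y \<in> C" "z \<in> C" "y \<noteq> z" "csg_adj V S y" "csg_adj V S z"
    using C(2) S unfolding min_degree_two_def by blast
  have "S \<noteq> y" "S \<noteq> z" using yz(4,5) irreflp_csg_adj by (auto dest: irreflpD)
  then have "proj y \<noteq> proj S \<or> proj z \<noteq> proj S"
    using fibre_card_le_two[of S y z] C(1) S yz(1-3) by blast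
  then show ?thesis using that yz by blast
qed

lemma min_degree_two_proj:
  assumes C: "C \<subseteq> nodes" "min_degree_two (csg_adj V) C"
  shows "min_degree_two (csg_adj V') (proj ` C)"
  unfolding min_degree_two_def
proof
  fix X assume "X \<in> proj ` C"
  then obtain S where S: "S \<in> C" "X = proj S" by blast
  obtain z where z: "z \<in> C" "csg_adj V S z" "proj z \<noteq> proj S"
    using cross_neighbour[OF C S(1)] .
  obtain y where y: "y \<in> C" "csg_adj V S y" "y \<noteq> z"
    using C(2) S(1) unfolding min_degree_two_def by metis
  have Sz': "csg_adj V' (proj S) (proj z)"
    using proj_csg_adj C(1) S(1) z by (metis subsetD)
  show "\<exists>Y\<in>proj ` C. \<exists>Z\<in>proj ` C. Y \<noteq> Z \<and> csg_adj V' X Y \<and> csg_adj V' X Z"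
  proof (cases "proj y = proj S")
    case False
    have "proj y \<noteq> proj z"
      using cross_edge_unique[of y S z S] C(1) S(1) y z False csg_adj_sym by blast
    moreover have "csg_adj V' (proj S) (proj y)"
      using proj_csg_adj C(1) S(1) y False by (metis subsetD)
    ultimately show ?thesis using Sz' S y(1) z(1) by blast
  next
    case True
    \<comment> \<open>then \<open>y\<close>, lying over the same node as \<open>S\<close>, contributes a second cross edge\<close>
    obtain w where w: "w \<in> C" "csg_adj V y w" "proj w \<noteq> proj y"
      using cross_neighbour[OF C y(1)] .
    have "S \<noteq> y" using y(2) irreflp_csg_adj by (auto dest: irreflpD)
    then have "proj w \<noteq> proj z"
      using cross_edge_unique[of S z y w] C(1) S(1) y z w True by auto
    moreover have "csg_adj V' (proj S) (proj w)"
      using proj_csg_adj C(1) y(1) w True by (metis subsetD)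
    ultimately show ?thesis using Sz' S w(1) z(1) by blast
  qed
qed

lemma forest_introduce:
  assumes "forest nodes' (csg_adj V')"
  shows "forest nodes (csg_adj V)"
proof -
  have "\<not> (\<exists>C\<subseteq>nodes. finite C \<and> C \<noteq> {} \<and> min_degree_two (csg_adj V) C)"
  proof (intro notI, elim exE conjE)
    fix C assume C: "C \<subseteq> nodes" "finite C" "C \<noteq> {}" "min_degree_two (csg_adj V) C"
    then have "proj ` C \<subseteq> nodes'" "finite (proj ` C)" "proj ` C \<noteq> {}"
      using proj_node by auto
    moreover have "min_degree_two (csg_adj V') (proj ` C)"
      using min_degree_two_proj C(1,4) .
    ultimately show False
      using assms forest_iff_no_min_degree_two[OF symp_csg_adj irreflp_csg_adj] by blast
  qed
  then show ?thesis using forest_iff_no_min_degree_two[OF symp_csg_adj irreflp_csg_adj] by blast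
qed

lemma inj_nbhd_introduce:
  assumes inj': "inj_nbhd nodes' (csg_adj V') (csg_label T')"
  shows "inj_nbhd nodes (csg_adj V) (csg_label T)"
  unfolding inj_nbhd_def
proof (intro ballI impI notI)
  fix x y z assume n: "x \<in> nodes" "y \<in> nodes" "z \<in> nodes"
    and "csg_adj V x y \<and> csg_adj V x z \<and> y \<noteq> z"
    and lab: "csg_label T y = csg_label T z"
  then have adj: "csg_adj V x y" "csg_adj V x z" and "y \<noteq> z" by blast+
  have "colour_v y = colour_v z" using lab by (simp add: colour_v_def)
  have lab': "csg_label T' (proj y) = csg_label T' (proj z)"
    using lab csg_label_proj n(2,3) by simp
  then have free: "free_colours (proj y) = free_colours (proj z)"
    by (simp add: free_colours_def)
  have "proj y \<noteq> proj z"
    using node_eqI[OF n(2,3)] \<open>colour_v y = colour_v z\<close> \<open>y \<noteq> z\<close> by blast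
  \<comment> \<open>a neighbour in the fibre of \<open>x\<close> shares its free colours, a cross neighbour does not\<close>
  have not_fibre: "proj w \<noteq> proj x"
    if "u \<in> nodes" "csg_adj V x u" "proj u \<noteq> proj w"
      "free_colours (proj w) = free_colours (proj u)" for w u
  proof
    assume "proj w = proj x"
    then have "proj x \<noteq> proj u" using that(3) by simp
    then have "free_colours (proj x) \<noteq> free_colours (proj u)"
      using csg_adj_cases[OF n(1) that(1,2)] by blast
    with \<open>proj w = proj x\<close> that(4) show False by simp
  qed
  have "proj y \<noteq> proj x" "proj z \<noteq> proj x"
    using not_fibre[OF n(3) adj(2) \<open>proj y \<noteq> proj z\<close>[symmetric] free]
      not_fibre[OF n(2) adj(1) \<open>proj y \<noteq> proj z\<close> free[symmetric]] by simp_all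
  then have "csg_adj V' (proj x) (proj y)" "csg_adj V' (proj x) (proj z)"
    using proj_csg_adj[OF n(1,2) adj(1)] proj_csg_adj[OF n(1,3) adj(2)] by simp_all
  moreover have "proj x \<in> nodes'" "proj y \<in> nodes'" "proj z \<in> nodes'"
    using proj_node n by simp_all
  ultimately show False
    using inj' \<open>proj y \<noteq> proj z\<close> lab' unfolding inj_nbhd_def by blast
qed

end

theorem lemma8:
  fixes V :: "'a set" and E :: "'a set set" and T :: "'a set" and v :: 'a and k :: nat
  assumes "k \<ge> 3"
    and "sgraph V E"
    and "l_connected (k - 2) V E"
    and "colorable k V E"
    and "chordal V E"
    and "is_clique V E T"
    and "T \<noteq> V"
    and "introduces V E T v"
  shows "(color_complete (k - 2) k
             (csg_nodes k (V - {v}) {e \<in> E. v \<notin> e} (T - {v})) (csg_adj (V - {v}))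
             (csg_label (T - {v}))
          \<longrightarrow> color_complete (k - 1) k (csg_nodes k V E T) (csg_adj V) (csg_label T))
       \<and> ((card T = k \<or>
            (forest (csg_nodes k (V - {v}) {e \<in> E. v \<notin> e} (T - {v})) (csg_adj (V - {v})) \<and>
             inj_nbhd (csg_nodes k (V - {v}) {e \<in> E. v \<notin> e} (T - {v})) (csg_adj (V - {v}))
               (csg_label (T - {v}))))
          \<longrightarrow> forest (csg_nodes k V E T) (csg_adj V) \<and>
              inj_nbhd (csg_nodes k V E T) (csg_adj V) (csg_label T))"
proof -
  interpret introduce_vertex V E T v k
    using assms(2,6,8) by unfold_locales (auto simp: introduces_def)
  have "forest nodes (csg_adj V) \<and> inj_nbhd nodes (csg_adj V) (csg_label T)"
    if hyp: "card T = k \<or> forest nodes' (csg_adj V') \<and> inj_nbhd nodes' (csg_adj V') (csg_label T')"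
  proof (cases "card T = k")
    case True
    then show ?thesis
      using csg_no_adj_if_card_clique_eq[OF clique True]
      by (intro edgeless_forest_inj_nbhd) (auto simp: csg_nodes_eq)
  next
    case False
    then interpret two_free_colours V E T v k
      using card_T'_eq assms(1,3,4,7) by unfold_locales auto
    show ?thesis using hyp False forest_introduce inj_nbhd_introduce by blast
  qed
  then show ?thesis using color_complete_introduce assms(1,4) by auto
qed

end
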